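(* Let $\rho$ be a congruence on $\mathcal{OR}_n$ with $\rho(0)=\mathcal I_k$ for some $k\in\{0,1,\dots,m-1\}$, and let $\sigma\in\mathcal{OR}_n$ with $\mathrm{rk}(\sigma)>k+1$. Then for every $\tau\in\mathcal{OR}_n$, $\tau\,\rho\,\sigma$ if and only if $\tau=\sigma$.
   Context: Let $m\ge 1$, $n=2m$, $\mathbf n=\{1,\dots,n\}$, $\theta(i)=n+1-i$, written $\bar i$. A proper subset $I\subset\mathbf n$ is admissible if $I\cap\theta(I)=\emptyset$; $\mathbf n$ and $\emptyset$ are also admissible. For an injective partial map $\sigma$ of $\mathbf n$, $I(\sigma)$ is its domain, $J(\sigma)$ its image, $\mathrm{rk}(\sigma)=|I(\sigma)|$; products are compositions of partial maps. $W=\{\sigma\in S_n:\sigma(\bar i)=\overline{\sigma(i)}\ \forall i\}$, $W'=\{\sigma\in W:|\sigma(\{1,\dots,m\})\cap\{m+1,\dots,n\}|\text{ even}\}$. An admissible $m$-subset is of type I if it contains an even number of elements $>m$, type II otherwise. $\mathcal{OR}_n$ consists of the injective partial maps $\sigma$ with: $\mathrm{rk}(\sigma)<m$ and $I(\sigma),J(\sigma)$ admissible; or $\mathrm{rk}(\sigma)=m$ and $I(\sigma),J(\sigma)$ admissible of the same type; or $\sigma\in W'$. $\mathcal I_k=\{\sigma\in\mathcal{OR}_n:\mathrm{rk}(\sigma)\le k\}$. $0$ is the empty map and $\rho(0)$ its $\rho$-class. *)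

theory Defs
  imports Main
begin

text \<open>Partial maps of n = 2m, represented as maps nat to nat option.
  The product of partial maps is composition; we use map_comp.
  (Congruences are compatible on both sides, so the order convention is irrelevant.)\<close>

type_synonym pmap = "nat \<rightharpoonup> nat"

definition nn :: "nat \<Rightarrow> nat" where "nn m = 2 * m"

definition theta :: "nat \<Rightarrow> nat \<Rightarrow> nat" where
  "theta m i = nn m + 1 - i"

definition admissible :: "nat \<Rightarrow> nat set \<Rightarrow> bool" where
  "admissible m I \<longleftrightarrow> I = {1..nn m} \<or> I = {} \<or>
     (I \<subset> {1..nn m} \<and> I \<inter> theta m ` I = {})"

definition pinj :: "nat \<Rightarrow> pmap \<Rightarrow> bool" where
  "pinj m \<sigma> \<longleftrightarrow> dom \<sigma> \<subseteq> {1..nn m} \<and> ran \<sigma> \<subseteq> {1..nn m} \<and> inj_on \<sigma> (dom \<sigma>)"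

definition rk :: "pmap \<Rightarrow> nat" where "rk \<sigma> = card (dom \<sigma>)"

definition pimg :: "pmap \<Rightarrow> nat set \<Rightarrow> nat set" where
  "pimg \<sigma> A = {j. \<exists>i\<in>A. \<sigma> i = Some j}"

definition Wgrp :: "nat \<Rightarrow> pmap set" where
  "Wgrp m = {\<sigma>. pinj m \<sigma> \<and> dom \<sigma> = {1..nn m} \<and> ran \<sigma> = {1..nn m} \<and>
      (\<forall>i\<in>{1..nn m}. \<sigma> (theta m i) = map_option (theta m) (\<sigma> i))}"

definition Wprime :: "nat \<Rightarrow> pmap set" where
  "Wprime m = {\<sigma>\<in>Wgrp m. even (card (pimg \<sigma> {1..m} \<inter> {m+1..nn m}))}"

definition typeI :: "nat \<Rightarrow> nat set \<Rightarrow> bool" where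
  "typeI m I \<longleftrightarrow> even (card {i\<in>I. i > m})"

definition OR :: "nat \<Rightarrow> pmap set" where
  "OR m = {\<sigma>. pinj m \<sigma> \<and>
      ((rk \<sigma> < m \<and> admissible m (dom \<sigma>) \<and> admissible m (ran \<sigma>)) \<or>
       (rk \<sigma> = m \<and> admissible m (dom \<sigma>) \<and> admissible m (ran \<sigma>) \<and>
          (typeI m (dom \<sigma>) \<longleftrightarrow> typeI m (ran \<sigma>))) \<or>
       \<sigma> \<in> Wprime m)}"

definition Ik :: "nat \<Rightarrow> nat \<Rightarrow> pmap set" where
  "Ik m k = {\<sigma>\<in>OR m. rk \<sigma> \<le> k}"

definition congruence_OR :: "nat \<Rightarrow> pmap rel \<Rightarrow> bool" where
  "congruence_OR m \<rho> \<longleftrightarrow> equiv (OR m) \<rho> \<and>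
     (\<forall>a b c. (a, b) \<in> \<rho> \<and> c \<in> OR m \<longrightarrow>
        (c \<circ>\<^sub>m a, c \<circ>\<^sub>m b) \<in> \<rho> \<and> (a \<circ>\<^sub>m c, b \<circ>\<^sub>m c) \<in> \<rho>)"

end

theory Submission
  imports Defs
begin

text \<open>Since I_k is a \<rho>-class, \<rho> preserves the property "rank \<le> k". If a \<rho> b with
  rk a > k and x \<in> dom a, multiply on the right by the partial identity on an admissible
  (k+1)-subset B of dom a containing x: then a restricted to B has rank k+1, so b restricted
  to B has rank > k, forcing x \<in> dom b. Hence \<tau> \<rho> \<sigma> gives dom \<tau> = dom \<sigma>. If \<tau> x \<noteq> \<sigma> x, multiply
  on the left by the partial identity on an admissible subset of ran \<sigma> of size > k containing
  \<sigma> x but not \<tau> x; removing \<tau> x is what costs the extra 1 in rk \<sigma> > k + 1. The domain argument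
  applied to the products then puts x in the domain of the left product with \<tau>, a contradiction.\<close>

definition theta_free :: "nat \<Rightarrow> nat set \<Rightarrow> bool" where
  "theta_free m B \<longleftrightarrow> B \<subseteq> {1..nn m} \<and> B \<inter> theta m ` B = {}"

lemma theta_in: "i \<in> {1..nn m} \<Longrightarrow> theta m i \<in> {1..nn m}"
  by (auto simp: theta_def nn_def)

lemma theta_theta: "i \<in> {1..nn m} \<Longrightarrow> theta m (theta m i) = i"
  by (auto simp: theta_def nn_def)

lemma theta_neq: "theta m i \<noteq> i"
  unfolding theta_def nn_def by presburger

lemma inj_on_theta: "inj_on (theta m) {1..nn m}"
  by (rule inj_onI) (auto simp: theta_def nn_def)

lemma theta_free_subset: "theta_free m B \<Longrightarrow> A \<subseteq> B \<Longrightarrow> theta_free m A"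
  unfolding theta_free_def by blast

lemma finite_theta_free: "theta_free m B \<Longrightarrow> finite B"
  unfolding theta_free_def using finite_subset by blast

lemma card_theta_free_Un:
  assumes "theta_free m B"
  shows "card (B \<union> theta m ` B) = 2 * card B"
proof -
  have "inj_on (theta m) B"
    using assms inj_on_theta inj_on_subset unfolding theta_free_def by blast
  then show ?thesis
    using assms card_Un_disjoint[of B "theta m ` B"] card_image finite_theta_free
    unfolding theta_free_def by fastforce
qed

lemma theta_free_Un_subset: "theta_free m B \<Longrightarrow> B \<union> theta m ` B \<subseteq> {1..nn m}"
  unfolding theta_free_def using theta_in by blast

lemma card_theta_free_le: "theta_free m B \<Longrightarrow> card B \<le> m"
  using card_mono[OF _ theta_free_Un_subset] card_theta_free_Un by (fastforce simp: nn_def)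

lemma card_theta_free_cover:
  assumes "theta_free m B" "{1..nn m} \<subseteq> B \<union> theta m ` B"
  shows "card B = m"
proof -
  have "B \<union> theta m ` B = {1..nn m}"
    using assms(2) theta_free_Un_subset[OF assms(1)] by (rule antisym[rotated])
  then have "2 * card B = 2 * m"
    using card_theta_free_Un[OF assms(1)] by (simp add: nn_def)
  then show ?thesis
    by simp
qed

lemma admissible_if_theta_free: "theta_free m B \<Longrightarrow> admissible m B"
  unfolding admissible_def theta_free_def by blast

lemma theta_free_if_admissible: "admissible m A \<Longrightarrow> A \<noteq> {1..nn m} \<Longrightarrow> theta_free m A"
  unfolding admissible_def theta_free_def by auto

text \<open>Take x and theta y from their pairs {i, theta i}, and the smaller element of every other pair.\<close>
lemma theta_free_separating:
  assumes "x \<in> {1..nn m}" "y \<in> {1..nn m}" "x \<noteq> y"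
  obtains B where "theta_free m B" "card B = m" "x \<in> B" "y \<notin> B"
proof -
  define B where "B = {i \<in> {1..nn m}. i \<in> {x, theta m y} \<or> (i \<le> m \<and> theta m i \<notin> {x, theta m y})}"
  have "theta_free m B"
    using assms unfolding theta_free_def B_def by (auto simp: theta_def nn_def) presburger+
  moreover have "{1..nn m} \<subseteq> B \<union> theta m ` B"
  proof
    fix i assume i: "i \<in> {1..nn m}"
    then have "i \<in> B \<or> theta m i \<in> B"
      using assms unfolding B_def by (auto simp: theta_def nn_def)
    then show "i \<in> B \<union> theta m ` B"
      using i theta_theta by (metis Un_iff image_eqI)
  qed
  moreover have "x \<in> B" "y \<notin> B"
    using assms unfolding B_def by (auto simp: theta_def nn_def) presburger+
  ultimately show ?thesis using that card_theta_free_cover by blast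
qed

lemma obtain_subset_with_card_containing:
  assumes "finite A" "x \<in> A" "k < card A"
  obtains B where "B \<subseteq> A" "x \<in> B" "card B = Suc k"
proof -
  have "k \<le> card (A - {x})"
    using assms by simp
  then obtain B' where "B' \<subseteq> A - {x}" "card B' = k"
    by (meson obtain_subset_with_card_n)
  moreover have "finite B'" "x \<notin> B'"
    using calculation assms(1) finite_subset by blast+
  ultimately show ?thesis
    using that[of "insert x B'"] assms(2) by auto
qed

lemma admissible_obtain_theta_free_subset:
  assumes "admissible m A" "x \<in> A" "k < m" "k < card A"
  obtains B where "theta_free m B" "B \<subseteq> A" "x \<in> B" "card B = Suc k"
proof -
  obtain B0 where B0: "theta_free m B0" "B0 \<subseteq> A" "x \<in> B0" "k < card B0"
  proof (cases "A = {1..nn m}")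
    case True
    with assms(2) have x: "x \<in> {1..nn m}"
      by simp
    obtain B0 where "theta_free m B0" "card B0 = m" "x \<in> B0"
      using theta_free_separating[OF x theta_in[OF x] theta_neq[symmetric]] by blast
    with True assms(3) show ?thesis
      using that unfolding theta_free_def by blast
  qed (use assms that theta_free_if_admissible in blast)
  then obtain B where "B \<subseteq> B0" "x \<in> B" "card B = Suc k"
    using obtain_subset_with_card_containing[OF finite_theta_free[OF B0(1)] B0(3,4)] by blast
  then show ?thesis
    using that theta_free_subset[OF B0(1)] B0(2) by blast
qed

lemma admissible_obtain_theta_free_subset_avoiding:
  assumes "admissible m A" "x \<in> A" "y \<in> {1..nn m}" "y \<noteq> x" "k < m" "Suc k < card A"
  obtains C where "theta_free m C" "C \<subseteq> A" "x \<in> C" "y \<notin> C" "k < card C"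
proof (cases "A = {1..nn m}")
  case True
  with assms obtain C where "theta_free m C" "card C = m" "x \<in> C" "y \<notin> C"
    using theta_free_separating[of x m y] by metis
  with True assms(5) show ?thesis
    using that unfolding theta_free_def by blast
next
  case False
  then have "theta_free m (A - {y})"
    using assms(1) theta_free_if_admissible theta_free_subset by blast
  moreover have "k < card (A - {y})"
    using assms(6) card_Diff1_le[of A y] by (simp add: card_Diff_singleton_if split: if_splits)
  ultimately show ?thesis using that assms(2,4) by blast
qed

lemma dom_restrict_Some: "dom (Some |` B) = B"
  by (auto simp: dom_def restrict_map_def)

lemma ran_restrict_Some: "ran (Some |` B) = B"
  by (auto simp: ran_def restrict_map_def)

lemma restrict_Some_in_OR:
  assumes "theta_free m B"
  shows "Some |` B \<in> OR m"
proof -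
  have "pinj m (Some |` B)"
    using assms unfolding pinj_def theta_free_def
    by (auto simp: dom_restrict_Some ran_restrict_Some inj_on_def)
  moreover have "rk (Some |` B) \<le> m"
    using card_theta_free_le[OF assms] by (simp add: rk_def)
  ultimately show ?thesis
    using admissible_if_theta_free[OF assms] unfolding OR_def
    by (auto simp: ran_restrict_Some)
qed

lemma map_comp_restrict_Some: "f \<circ>\<^sub>m (Some |` B) = f |` B"
  by (auto simp: map_comp_def restrict_map_def)

lemma dom_restrict_Some_comp: "dom ((Some |` C) \<circ>\<^sub>m f) = f -` Some ` C"
  by (auto simp: map_comp_def restrict_map_def split: option.splits if_splits)

lemma card_vimage_Some_image:
  assumes "inj_on f (dom f)" "C \<subseteq> ran f"
  shows "card (f -` Some ` C) = card C"
proof -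
  have "inj_on f (f -` Some ` C)"
    using assms(1) by (rule inj_on_subset) auto
  moreover have "Some ` C \<subseteq> f ` (f -` Some ` C)"
  proof
    fix c assume "c \<in> Some ` C"
    then obtain j where j: "c = Some j" "j \<in> C"
      by blast
    then obtain i where i: "f i = Some j"
      using assms(2) by (auto simp: ran_def)
    with j have "i \<in> f -` Some ` C" "c = f i"
      by auto
    then show "c \<in> f ` (f -` Some ` C)"
      by blast
  qed
  then have "f ` (f -` Some ` C) = Some ` C"
    by blast
  ultimately have "card (f -` Some ` C) = card (Some ` C)"
    by (metis card_image)
  also have "\<dots> = card C"
    by (simp add: card_image inj_on_def)
  finally show ?thesis .
qed

lemma card_ran_eq_rk:
  assumes "inj_on f (dom f)"
  shows "card (ran f) = rk f"
proof -
  have "f -` Some ` ran f = dom f"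
    by (auto simp: ran_def)
  then show ?thesis
    using card_vimage_Some_image[OF assms, of "ran f"] by (simp add: rk_def)
qed

lemma OR_pinj: "\<sigma> \<in> OR m \<Longrightarrow> pinj m \<sigma>"
  unfolding OR_def by blast

lemma OR_admissible_dom: "\<sigma> \<in> OR m \<Longrightarrow> admissible m (dom \<sigma>)"
  unfolding OR_def Wprime_def Wgrp_def admissible_def by auto

lemma OR_admissible_ran: "\<sigma> \<in> OR m \<Longrightarrow> admissible m (ran \<sigma>)"
  unfolding OR_def Wprime_def Wgrp_def admissible_def by auto

locale OR_congruence_Ik =
  fixes m k :: nat and \<rho> :: "pmap rel"
  assumes congruence: "congruence_OR m \<rho>"
    and zero_class: "\<rho> `` {Map.empty} = Ik m k"
    and k_less: "k < m"
begin

lemma equiv: "equiv (OR m) \<rho>"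
  using congruence unfolding congruence_OR_def by (rule conjunct1)

lemma related_in_OR: "(a, b) \<in> \<rho> \<Longrightarrow> a \<in> OR m \<and> b \<in> OR m"
  using equiv_type[OF equiv] by blast

lemma related_refl: "a \<in> OR m \<Longrightarrow> (a, a) \<in> \<rho>"
  using equiv by (blast elim: equivE intro: refl_onD)

lemma related_sym: "(a, b) \<in> \<rho> \<Longrightarrow> (b, a) \<in> \<rho>"
  using equiv by (blast elim: equivE intro: symD)

lemma related_trans: "(a, b) \<in> \<rho> \<Longrightarrow> (b, c) \<in> \<rho> \<Longrightarrow> (a, c) \<in> \<rho>"
  using equiv by (blast elim: equivE intro: transD)

lemma related_comp_left: "(a, b) \<in> \<rho> \<Longrightarrow> c \<in> OR m \<Longrightarrow> (c \<circ>\<^sub>m a, c \<circ>\<^sub>m b) \<in> \<rho>"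
  using congruence unfolding congruence_OR_def by simp

lemma related_comp_right: "(a, b) \<in> \<rho> \<Longrightarrow> c \<in> OR m \<Longrightarrow> (a \<circ>\<^sub>m c, b \<circ>\<^sub>m c) \<in> \<rho>"
  using congruence unfolding congruence_OR_def by simp

lemma rk_le_iff:
  assumes "(a, b) \<in> \<rho>"
  shows "rk a \<le> k \<longleftrightarrow> rk b \<le> k"
proof -
  have "(Map.empty, a) \<in> \<rho> \<longleftrightarrow> (Map.empty, b) \<in> \<rho>"
    using assms related_sym related_trans by blast
  then have "a \<in> Ik m k \<longleftrightarrow> b \<in> Ik m k"
    unfolding zero_class[symmetric] by simp
  then show ?thesis
    using related_in_OR[OF assms] unfolding Ik_def by blast
qed

lemma dom_subset:
  assumes ab: "(a, b) \<in> \<rho>" and rk: "k < rk a"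
  shows "dom a \<subseteq> dom b"
proof
  fix x assume x: "x \<in> dom a"
  show "x \<in> dom b"
  proof (rule ccontr)
    assume x_notin: "x \<notin> dom b"
    have "admissible m (dom a)"
      using related_in_OR[OF ab] OR_admissible_dom by blast
    moreover have "k < card (dom a)"
      using rk unfolding rk_def .
    ultimately obtain B where B: "theta_free m B" "B \<subseteq> dom a" "x \<in> B" "card B = Suc k"
      using admissible_obtain_theta_free_subset[OF _ x k_less] by blast
    have "(a |` B, b |` B) \<in> \<rho>"
      using related_comp_right[OF ab restrict_Some_in_OR[OF B(1)]]
      by (simp add: map_comp_restrict_Some)
    moreover have "rk (a |` B) = Suc k"
      using B unfolding rk_def by (simp add: Int_absorb1)
    moreover have "rk (b |` B) \<le> k"
    proof -
      have "dom (b |` B) \<subseteq> B - {x}"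
        using x_notin by auto
      then show ?thesis
        using B(3,4) finite_theta_free[OF B(1)] card_mono[of "B - {x}"] unfolding rk_def
        by fastforce
    qed
    ultimately show False
      using rk_le_iff by fastforce
  qed
qed

lemma dom_eq:
  assumes "(a, b) \<in> \<rho>" "k < rk a"
  shows "dom a = dom b"
proof -
  have "k < rk b"
    using rk_le_iff[OF assms(1)] assms(2) by simp
  then show ?thesis
    using dom_subset[OF assms] dom_subset[OF related_sym[OF assms(1)]] by blast
qed

lemma related_values_eq:
  assumes ts: "(\<tau>, \<sigma>) \<in> \<rho>" and rk: "Suc k < rk \<sigma>"
    and y: "\<tau> x = Some y" and z: "\<sigma> x = Some z"
  shows "y = z"
proof (rule ccontr)
  assume "y \<noteq> z"
  have \<sigma>_OR: "\<sigma> \<in> OR m" and pinj: "pinj m \<tau>" "pinj m \<sigma>"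
    using related_in_OR[OF ts] OR_pinj by blast+
  have "y \<in> {1..nn m}"
    using y pinj(1) unfolding pinj_def by (auto simp: ran_def)
  moreover have "z \<in> ran \<sigma>"
    using z by (auto simp: ran_def)
  moreover have "Suc k < card (ran \<sigma>)"
    using rk card_ran_eq_rk pinj(2) unfolding pinj_def by simp
  ultimately obtain C where C: "theta_free m C" "C \<subseteq> ran \<sigma>" "z \<in> C" "y \<notin> C" "k < card C"
    using admissible_obtain_theta_free_subset_avoiding[OF OR_admissible_ran[OF \<sigma>_OR]]
      \<open>y \<noteq> z\<close> k_less by blast
  have related: "((Some |` C) \<circ>\<^sub>m \<sigma>, (Some |` C) \<circ>\<^sub>m \<tau>) \<in> \<rho>"
    using related_comp_left[OF related_sym[OF ts] restrict_Some_in_OR[OF C(1)]] .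
  have "rk ((Some |` C) \<circ>\<^sub>m \<sigma>) = card C"
    using card_vimage_Some_image[of \<sigma> C] C(2) pinj(2) unfolding pinj_def rk_def
    by (simp add: dom_restrict_Some_comp)
  then have "dom ((Some |` C) \<circ>\<^sub>m \<sigma>) \<subseteq> dom ((Some |` C) \<circ>\<^sub>m \<tau>)"
    using dom_subset[OF related] C(5) by simp
  moreover have "x \<in> dom ((Some |` C) \<circ>\<^sub>m \<sigma>)"
    using z C(3) by (simp add: dom_restrict_Some_comp)
  ultimately have "x \<in> dom ((Some |` C) \<circ>\<^sub>m \<tau>)"
    by blast
  then have "y \<in> C"
    using y by (auto simp: dom_restrict_Some_comp)
  with C(4) show False ..
qed

lemma related_eq_if_rk_gt:
  assumes ts: "(\<tau>, \<sigma>) \<in> \<rho>" and rk: "Suc k < rk \<sigma>"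
  shows "\<tau> = \<sigma>"
proof (rule ext)
  fix x
  have same_dom: "dom \<tau> = dom \<sigma>"
    using dom_eq[OF related_sym[OF ts]] rk by simp
  show "\<tau> x = \<sigma> x"
  proof (cases "x \<in> dom \<sigma>")
    case False
    moreover have "x \<notin> dom \<tau>"
      using False same_dom by simp
    ultimately show ?thesis
      by (simp add: domIff)
  next
    case True
    then obtain y z where y: "\<tau> x = Some y" and z: "\<sigma> x = Some z"
      using same_dom by (metis domD)
    then show ?thesis
      using related_values_eq[OF ts rk y z] by simp
  qed
qed

end

theorem lemma4p9:
  fixes m k :: nat and \<rho> :: "pmap rel" and \<sigma> :: pmap
  assumes "m \<ge> 1"
    and "congruence_OR m \<rho>"
    and "k < m"
    and "\<rho> `` {Map.empty} = Ik m k"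
    and "\<sigma> \<in> OR m"
    and "rk \<sigma> > k + 1"
  shows "\<forall>\<tau>\<in>OR m. (\<tau>, \<sigma>) \<in> \<rho> \<longleftrightarrow> \<tau> = \<sigma>"
proof -
  interpret OR_congruence_Ik m k \<rho>
    using assms(2-4) by unfold_locales
  show ?thesis
  proof (intro ballI iffI)
    fix \<tau> assume "(\<tau>, \<sigma>) \<in> \<rho>"
    then show "\<tau> = \<sigma>"
      by (rule related_eq_if_rk_gt) (use assms(6) in simp)
  next
    fix \<tau> assume "\<tau> = \<sigma>"
    then show "(\<tau>, \<sigma>) \<in> \<rho>"
      using related_refl assms(5) by simp
  qed
qed

end
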